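(* Let $e\ge 4$. The number of sparse colourings of the triangle $\triangle_{2,e-1}$ (a triangle of height $e-4$) equals the Catalan number $C_{e-3}=\frac{1}{e-2}\binom{2(e-3)}{e-3}$.
   Context: Dots are pairs of integers $(\alpha,\beta)$. For integers $\delta<\varepsilon$, the triangle $\triangle_{\delta,\varepsilon}$ is the set of dots $(\alpha,\beta)$ with $\delta\le\alpha$, $\beta\le\varepsilon$ and $\beta-\alpha\ge 2$; its height is $\varepsilon-\delta-1$. For a dot $(\alpha,\beta)\in\triangle_{\delta,\varepsilon}$, the sub-triangle $\triangle_{\alpha,\beta}$ is defined by the same rule. A colouring assigns to each dot the colour black or white. A coloured triangle $\triangle_{\delta,\varepsilon}$ is sparse if for every dot $(\alpha,\beta)\in\triangle_{\delta,\varepsilon}$ (including the vertex $(\delta,\varepsilon)$) the number of black dots in $\triangle_{\alpha,\beta}$ is at most $\beta-\alpha-1$, with equality if and only if $(\alpha,\beta)$ is black. (For $e=4$ the triangle is empty and has exactly one colouring.) *)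

theory Defs
  imports Main
begin

definition triangle :: "int \<Rightarrow> int \<Rightarrow> (int \<times> int) set" where
  "triangle d e = {(a, b). d \<le> a \<and> b \<le> e \<and> b - a \<ge> 2}"

text \<open>A colouring of a triangle is represented by its set of black dots B (a subset of
  the triangle); all other dots of the triangle are white.\<close>
definition sparse :: "int \<Rightarrow> int \<Rightarrow> (int \<times> int) set \<Rightarrow> bool" where
  "sparse d e B \<longleftrightarrow>
     (\<forall>(a, b) \<in> triangle d e.
        int (card (B \<inter> triangle a b)) \<le> b - a - 1 \<and>
        (int (card (B \<inter> triangle a b)) = b - a - 1 \<longleftrightarrow> (a, b) \<in> B))"

definition sparse_colourings :: "int \<Rightarrow> int \<Rightarrow> (int \<times> int) set set" where
  "sparse_colourings d e = {B. B \<subseteq> triangle d e \<and> sparse d e B}"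

end

theory Submission
  imports Defs
begin

(* For a colouring B of the triangle with vertex (d, e) write
   defect B a b = (b - a - 1) - #(black dots of the sub-triangle with vertex (a, b));
   sparseness says: every defect inside the triangle is >= 0, and it is 0 exactly at
   the black dots.  The profile of B is the sequence of defects along the top row,
   r i = defect B d (d + 1 + i) for i = 0 .. e - d - 1.  It starts with r 0 = 0 and
   increases by at most one per step, so it is a "Dyck sequence".
   Removing the top row gives a colouring of the triangle with vertex (d + 1, e), and
   the two profiles determine each other: a top-row dot is black iff the defect there
   is 0, and the defect recursion along rows links the two profiles.  Induction on the
   height therefore shows that the profile is a bijection between the sparse
   colourings of a triangle of height n and the Dyck sequences of length n + 1.
   Finally, counting Dyck sequences by their last value gives the ballot numbers (by
   a hockey-stick induction), and the total count is the Catalan number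
   binom(2n, n) - binom(2n, n + 1) = binom(2n, n) / (n + 1). *)

definition row :: "int \<Rightarrow> int \<Rightarrow> (int \<times> int) set" where
  "row d c = {(a, b). a = d \<and> d + 2 \<le> b \<and> b \<le> c}"

lemma finite_triangle [simp]: "finite (triangle a b)"
proof -
  have "triangle a b \<subseteq> {a..b} \<times> {a..b}" unfolding triangle_def by auto
  thus ?thesis by (rule finite_subset) auto
qed

lemma triangle_empty: "b < a + 2 \<Longrightarrow> triangle a b = {}"
  unfolding triangle_def by auto

lemma triangle_mono: "d \<le> a \<Longrightarrow> b \<le> e \<Longrightarrow> triangle a b \<subseteq> triangle d e"
  unfolding triangle_def by auto

lemma triangle_row_split: "triangle d c = triangle (d + 1) c \<union> row d c"
  unfolding triangle_def row_def by auto

lemma triangle_row_disjoint: "triangle (d + 1) e \<inter> row d c = {}"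
  unfolding triangle_def row_def by auto

lemma card_triangle_row_split:
  "card (B \<inter> triangle d c) = card (B \<inter> triangle (d + 1) c) + card (B \<inter> row d c)"
proof -
  have "B \<inter> triangle d c = (B \<inter> triangle (d + 1) c) \<union> (B \<inter> row d c)"
    using triangle_row_split[of d c] by blast
  moreover have "finite (B \<inter> row d c)"
    using triangle_row_split[of d c] finite_triangle[of d c] by (blast intro: finite_subset)
  moreover have "(B \<inter> triangle (d + 1) c) \<inter> (B \<inter> row d c) = {}"
    using triangle_row_disjoint[of d c] by blast
  ultimately show ?thesis by (simp add: card_Un_disjoint)
qed

section \<open>Defects and sparseness\<close>

text \<open>The defect of the sub-triangle with vertex (a, b): how many black dots it lacks
  to reach the bound b - a - 1 of the sparseness condition.\<close>
definition defect :: "(int \<times> int) set \<Rightarrow> int \<Rightarrow> int \<Rightarrow> int" where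
  "defect B a b = b - a - 1 - int (card (B \<inter> triangle a b))"

lemma defect_row_split: "defect B d c = defect B (d + 1) c + 1 - int (card (B \<inter> row d c))"
  unfolding defect_def using card_triangle_row_split[of B d c] by simp

lemma defect_empty_triangle: "b < a + 2 \<Longrightarrow> defect B a b = b - a - 1"
  unfolding defect_def using triangle_empty by simp

lemma defect_Suc_le: "defect B a (b + 1) \<le> defect B a b + 1"
proof -
  have "card (B \<inter> triangle a b) \<le> card (B \<inter> triangle a (b + 1))"
    by (rule card_mono) (auto simp: triangle_def intro: finite_subset[OF _ finite_triangle[of a "b + 1"]])
  thus ?thesis unfolding defect_def by simp
qed

lemma defect_restrict: "d \<le> a \<Longrightarrow> b \<le> e \<Longrightarrow> defect (B \<inter> triangle d e) a b = defect B a b"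
proof -
  assume "d \<le> a" "b \<le> e"
  hence "B \<inter> triangle d e \<inter> triangle a b = B \<inter> triangle a b"
    using triangle_mono by blast
  thus ?thesis unfolding defect_def by simp
qed

lemma sparse_iff_defect: "sparse d e B \<longleftrightarrow>
  (\<forall>(a, b) \<in> triangle d e. 0 \<le> defect B a b \<and> (defect B a b = 0 \<longleftrightarrow> (a, b) \<in> B))"
  unfolding sparse_def defect_def by (intro ball_cong refl) auto

lemma sparse_row_split: "sparse d e B \<longleftrightarrow> sparse (d + 1) e B \<and>
  (\<forall>(a, b) \<in> row d e. 0 \<le> defect B a b \<and> (defect B a b = 0 \<longleftrightarrow> (a, b) \<in> B))"
  unfolding sparse_iff_defect using triangle_row_split[of d e] by blast

lemma sparse_restrict: "sparse d e (B \<inter> triangle d e) \<longleftrightarrow> sparse d e B"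
proof -
  have "defect (B \<inter> triangle d e) a b = defect B a b" if "(a, b) \<in> triangle d e" for a b
    using that by (intro defect_restrict) (auto simp: triangle_def)
  thus ?thesis unfolding sparse_iff_defect by (intro ball_cong refl) auto
qed

text \<open>In a sparse triangle all defects are non-negative, including those of the
  degenerate sub-triangles of height 0 (which lie outside the triangle proper).\<close>
lemma sparse_defect_nonneg:
  assumes "sparse d e B" "d \<le> a" "b \<le> e" "a < b"
  shows "0 \<le> defect B a b"
proof (cases "b < a + 2")
  case True thus ?thesis using defect_empty_triangle assms by simp
next
  case False
  hence "(a, b) \<in> triangle d e" using assms by (auto simp: triangle_def)
  thus ?thesis using assms(1) unfolding sparse_iff_defect by auto
qed

lemma sparse_top_row_black:
  assumes "sparse d e B" "(d, b) \<in> row d e"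
  shows "(d, b) \<in> B \<longleftrightarrow> defect B d b = 0"
  using assms unfolding sparse_row_split[of d e B] by auto

lemma sparse_colourings_restrict:
  "B \<in> sparse_colourings d e \<Longrightarrow> B \<inter> triangle (d + 1) e \<in> sparse_colourings (d + 1) e"
  unfolding sparse_colourings_def using sparse_row_split sparse_restrict by blast

section \<open>The profile bijection\<close>

definition dyck_seqs :: "nat \<Rightarrow> (nat \<Rightarrow> nat) set" where
  "dyck_seqs n = {r. r 0 = 0 \<and> (\<forall>i. Suc i < n \<longrightarrow> r (Suc i) \<le> Suc (r i)) \<and> (\<forall>i\<ge>n. r i = 0)}"

lemma dyck_seqs_one: "dyck_seqs (Suc 0) = {\<lambda>_. 0}"
proof -
  have "r = (\<lambda>_. 0)" if "r \<in> dyck_seqs (Suc 0)" for r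
  proof
    fix i show "r i = 0" using that by (cases i) (auto simp: dyck_seqs_def)
  qed
  thus ?thesis by (auto simp: dyck_seqs_def)
qed

definition profile :: "int \<Rightarrow> int \<Rightarrow> (int \<times> int) set \<Rightarrow> nat \<Rightarrow> nat" where
  "profile d e B i = (if int i < e - d then nat (defect B d (d + 1 + int i)) else 0)"

lemma profile_defect:
  assumes "sparse d e B" "int i < e - d"
  shows "int (profile d e B i) = defect B d (d + 1 + int i)"
  using sparse_defect_nonneg[OF assms(1), of d "d + 1 + int i"] assms(2)
  by (simp add: profile_def)

lemma profile_in_dyck_seqs:
  assumes B: "B \<in> sparse_colourings d e" and "d < e"
  shows "profile d e B \<in> dyck_seqs (nat (e - d))"
proof -
  have s: "sparse d e B" using B by (simp add: sparse_colourings_def)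
  have "profile d e B 0 = 0"
    using \<open>d < e\<close> defect_empty_triangle[of "d + 1" d B] by (simp add: profile_def)
  moreover have "profile d e B (Suc i) \<le> Suc (profile d e B i)" if "Suc i < nat (e - d)" for i
  proof -
    have "int (profile d e B (Suc i)) = defect B d (d + 1 + int i + 1)"
      using profile_defect[OF s, of "Suc i"] that by (simp add: add.assoc)
    also have "\<dots> \<le> defect B d (d + 1 + int i) + 1" by (rule defect_Suc_le)
    also have "\<dots> = int (profile d e B i) + 1" using profile_defect[OF s, of i] that by simp
    finally show ?thesis by simp
  qed
  moreover have "profile d e B i = 0" if "i \<ge> nat (e - d)" for i
    using that by (simp add: profile_def)
  ultimately show ?thesis unfolding dyck_seqs_def by blast
qed

lemma profile_bij_height_0:
  "bij_betw (profile d (d + 1)) (sparse_colourings d (d + 1)) (dyck_seqs (Suc 0))"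
proof -
  have "triangle d (d + 1) = {}" by (rule triangle_empty) simp
  hence "sparse_colourings d (d + 1) = {{}}"
    unfolding sparse_colourings_def sparse_def by auto
  moreover have "profile d (d + 1) {} = (\<lambda>_. 0)"
    by (auto simp: profile_def defect_def)
  ultimately show ?thesis by (simp add: dyck_seqs_one bij_betw_def)
qed

text \<open>Injectivity passes from height n to height n + 1: the profile determines the
  colouring of the top row (black exactly where the defect vanishes) and, through the
  row recursion of defects, the profile of the lower triangle.\<close>
lemma profile_inj_step:
  assumes inj: "inj_on (profile (d + 1) e) (sparse_colourings (d + 1) e)"
  shows "inj_on (profile d e) (sparse_colourings d e)"
proof (rule inj_onI)
  fix B1 B2
  assume B1: "B1 \<in> sparse_colourings d e" and B2: "B2 \<in> sparse_colourings d e"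
    and eq: "profile d e B1 = profile d e B2"
  have s1: "sparse d e B1" and s2: "sparse d e B2"
    using B1 B2 by (auto simp: sparse_colourings_def)
  have top_defect: "defect B1 d c = defect B2 d c" if "d + 1 \<le> c" "c \<le> e" for c
  proof -
    define i where "i = nat (c - d - 1)"
    have c: "c = d + 1 + int i" "int i < e - d" using that i_def by auto
    have "int (profile d e B1 i) = int (profile d e B2 i)" using eq by simp
    thus ?thesis using profile_defect[OF s1 c(2)] profile_defect[OF s2 c(2)] c(1) by simp
  qed
  have top_row: "B1 \<inter> row d e = B2 \<inter> row d e"
  proof -
    have "(d, b) \<in> B1 \<longleftrightarrow> (d, b) \<in> B2" if "(d, b) \<in> row d e" for b
      using sparse_top_row_black[OF s1 that] sparse_top_row_black[OF s2 that] top_defect[of b] that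
      by (simp add: row_def)
    thus ?thesis by (auto simp: row_def)
  qed
  have lower_defect: "defect B1 (d + 1) c = defect B2 (d + 1) c" if "d + 1 \<le> c" "c \<le> e" for c
  proof -
    have "row d c \<subseteq> row d e" using that by (auto simp: row_def)
    hence "B1 \<inter> row d c = B2 \<inter> row d c" using top_row by blast
    thus ?thesis using defect_row_split[of B1 d c] defect_row_split[of B2 d c] top_defect[OF that]
      by simp
  qed
  have "profile (d + 1) e (B1 \<inter> triangle (d + 1) e) = profile (d + 1) e (B2 \<inter> triangle (d + 1) e)"
  proof
    fix i
    have "defect (B1 \<inter> triangle (d + 1) e) (d + 1) c = defect (B2 \<inter> triangle (d + 1) e) (d + 1) c"
      if "d + 1 + 1 \<le> c" "c \<le> e" for c
      using that lower_defect[of c] by (simp add: defect_restrict)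
    thus "profile (d + 1) e (B1 \<inter> triangle (d + 1) e) i = profile (d + 1) e (B2 \<inter> triangle (d + 1) e) i"
      unfolding profile_def by simp
  qed
  hence "B1 \<inter> triangle (d + 1) e = B2 \<inter> triangle (d + 1) e"
    using inj sparse_colourings_restrict[OF B1] sparse_colourings_restrict[OF B2]
    by (auto dest: inj_onD)
  moreover have "B1 = (B1 \<inter> triangle (d + 1) e) \<union> (B1 \<inter> row d e)"
    and "B2 = (B2 \<inter> triangle (d + 1) e) \<union> (B2 \<inter> row d e)"
    using B1 B2 triangle_row_split[of d e] by (auto simp: sparse_colourings_def)
  ultimately show "B1 = B2" using top_row by simp
qed

text \<open>For a prospective profile r, zero_count r i counts the positions j <= i with
  r (j + 1) = 0, i.e. the black dots among the first i + 1 dots of the top row.\<close>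
definition zero_count :: "(nat \<Rightarrow> nat) \<Rightarrow> nat \<Rightarrow> nat" where
  "zero_count r i = card {j. j \<le> i \<and> r (Suc j) = 0}"

lemma zero_count_0: "zero_count r 0 = (if r (Suc 0) = 0 then 1 else 0)"
proof -
  have "{j. j \<le> 0 \<and> r (Suc j) = 0} = (if r (Suc 0) = 0 then {0} else {})"
    by (cases "r (Suc 0) = 0") (auto intro!: gr0I)
  thus ?thesis unfolding zero_count_def by simp
qed

lemma zero_count_Suc:
  "zero_count r (Suc i) = zero_count r i + (if r (Suc (Suc i)) = 0 then 1 else 0)"
proof -
  have "{j. j \<le> Suc i \<and> r (Suc j) = 0} = {j. j \<le> i \<and> r (Suc j) = 0} \<union>
      (if r (Suc (Suc i)) = 0 then {Suc i} else {})" by (auto simp: le_Suc_eq)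
  moreover have "finite {j. j \<le> i \<and> r (Suc j) = 0}" by simp
  ultimately show ?thesis unfolding zero_count_def by simp
qed

lemma zero_count_pos: "1 \<le> r (Suc i) + zero_count r i"
proof (cases "r (Suc i) = 0")
  case True
  hence "{i} \<subseteq> {j. j \<le> i \<and> r (Suc j) = 0}" by auto
  from card_mono[OF _ this] show ?thesis unfolding zero_count_def by simp
qed simp

text \<open>The profile that the triangle one row down must have, for the colouring with
  profile r (whose top row is read off from the zeros of r).\<close>
definition lower_profile :: "nat \<Rightarrow> (nat \<Rightarrow> nat) \<Rightarrow> nat \<Rightarrow> nat" where
  "lower_profile n r i = (if i < Suc n then r (Suc i) + zero_count r i - 1 else 0)"

lemma lower_profile_in_dyck_seqs:
  assumes r: "r \<in> dyck_seqs (Suc (Suc n))"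
  shows "lower_profile n r \<in> dyck_seqs (Suc n)"
proof -
  have "r (Suc 0) \<le> 1" using r by (auto simp: dyck_seqs_def)
  hence "lower_profile n r 0 = 0" by (auto simp: lower_profile_def zero_count_0)
  moreover have "lower_profile n r (Suc i) \<le> Suc (lower_profile n r i)" if "Suc i < Suc n" for i
  proof -
    have "r (Suc (Suc i)) \<le> Suc (r (Suc i))" using r that by (simp add: dyck_seqs_def)
    thus ?thesis using that zero_count_Suc[of r i] zero_count_pos[of r i]
      by (auto simp: lower_profile_def)
  qed
  moreover have "lower_profile n r i = 0" if "i \<ge> Suc n" for i
    using that by (simp add: lower_profile_def)
  ultimately show ?thesis unfolding dyck_seqs_def by blast
qed

text \<open>The top-row dots that are black in the colouring with profile r.\<close>
definition top_row_dots :: "int \<Rightarrow> nat \<Rightarrow> (nat \<Rightarrow> nat) \<Rightarrow> (int \<times> int) set" where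
  "top_row_dots d n r = (\<lambda>j. (d, d + 2 + int j)) ` {j. j \<le> n \<and> r (Suc j) = 0}"

lemma top_row_dots_in_row: "top_row_dots d n r \<subseteq> row d (d + 2 + int n)"
  by (auto simp: top_row_dots_def row_def)

lemma card_top_row_dots:
  assumes "i \<le> n"
  shows "card (top_row_dots d n r \<inter> row d (d + 2 + int i)) = zero_count r i"
proof -
  have "top_row_dots d n r \<inter> row d (d + 2 + int i) =
      (\<lambda>j. (d, d + 2 + int j)) ` {j. j \<le> i \<and> r (Suc j) = 0}"
    using assms by (auto simp: top_row_dots_def row_def)
  moreover have "inj (\<lambda>j::nat. (d, d + 2 + int j))" by (auto intro: injI)
  ultimately show ?thesis unfolding zero_count_def by (simp add: card_image inj_on_subset)
qed

lemma union_top_row: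
  assumes "B' \<subseteq> triangle (d + 1) e"
  shows "T \<subseteq> row d e \<Longrightarrow> (B' \<union> T) \<inter> triangle (d + 1) e = B'"
    and "(B' \<union> T) \<inter> row d c = T \<inter> row d c"
  using assms triangle_row_disjoint[of d e] triangle_row_disjoint[of d e c] by blast+

text \<open>The inverse construction: a sparse colouring B' of the lower triangle with the
  lower profile of r, together with the top-row dots given by the zeros of r, is a
  sparse colouring of the whole triangle with profile r.\<close>
context
  fixes d e :: int and n :: nat and r :: "nat \<Rightarrow> nat" and B' :: "(int \<times> int) set"
  assumes B': "B' \<in> sparse_colourings (d + 1) e"
    and lower: "lower_profile n r = profile (d + 1) e B'"
    and height: "e = d + 2 + int n"
    and r: "r \<in> dyck_seqs (Suc (Suc n))"
begin

lemma extension_lower: "(B' \<union> top_row_dots d n r) \<inter> triangle (d + 1) e = B'"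
  using B' top_row_dots_in_row height by (intro union_top_row) (auto simp: sparse_colourings_def)

lemma extension_top: "(B' \<union> top_row_dots d n r) \<inter> row d c = top_row_dots d n r \<inter> row d c"
  using B' by (intro union_top_row) (auto simp: sparse_colourings_def)

lemma extension_defect:
  assumes "i \<le> n"
  shows "defect (B' \<union> top_row_dots d n r) d (d + 2 + int i) = int (r (Suc i))"
proof -
  let ?B = "B' \<union> top_row_dots d n r" and ?c = "d + 2 + int i"
  have s': "sparse (d + 1) e B'" using B' by (simp add: sparse_colourings_def)
  have "defect ?B (d + 1) ?c = defect B' (d + 1) ?c"
    using defect_restrict[of "d + 1" "d + 1" ?c e ?B] extension_lower assms height by simp
  also have "\<dots> = int (lower_profile n r i)"
    using profile_defect[OF s', of i] assms height by (simp add: lower add.assoc)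
  also have "\<dots> = int (r (Suc i)) + int (zero_count r i) - 1"
    using assms zero_count_pos[of r i] by (auto simp: lower_profile_def)
  finally show ?thesis
    using defect_row_split[of ?B d ?c] card_top_row_dots[OF assms] extension_top by simp
qed

lemma extension_sparse: "B' \<union> top_row_dots d n r \<in> sparse_colourings d e"
proof -
  let ?B = "B' \<union> top_row_dots d n r"
  have "?B \<subseteq> triangle d e"
    using B' top_row_dots_in_row[of d n r] height triangle_row_split[of d e]
    by (auto simp: sparse_colourings_def)
  moreover have "sparse d e ?B"
    unfolding sparse_row_split[of d e ?B]
  proof
    show "sparse (d + 1) e ?B"
      using sparse_restrict[of "d + 1" e ?B] extension_lower B' by (simp add: sparse_colourings_def)
    show "\<forall>(a, b)\<in>row d e. 0 \<le> defect ?B a b \<and> (defect ?B a b = 0) = ((a, b) \<in> ?B)"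
    proof (clarify)
      fix a b assume ab: "(a, b) \<in> row d e"
      define i where "i = nat (b - d - 2)"
      have a: "a = d" and b: "b = d + 2 + int i" and i: "i \<le> n"
        using ab height by (auto simp: row_def i_def)
      have "(a, b) \<in> ?B \<longleftrightarrow> (a, b) \<in> top_row_dots d n r" using extension_top[of e] ab by blast
      also have "\<dots> \<longleftrightarrow> r (Suc i) = 0" using i by (auto simp: top_row_dots_def a b)
      finally show "0 \<le> defect ?B a b \<and> (defect ?B a b = 0) = ((a, b) \<in> ?B)"
        using extension_defect[OF i] a b by simp
    qed
  qed
  ultimately show ?thesis by (simp add: sparse_colourings_def)
qed

lemma extension_profile: "profile d e (B' \<union> top_row_dots d n r) = r"
proof
  fix i
  show "profile d e (B' \<union> top_row_dots d n r) i = r i"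
  proof (cases i)
    case 0
    thus ?thesis using r defect_empty_triangle[of "d + 1" d] height
      by (simp add: profile_def dyck_seqs_def)
  next
    case (Suc k)
    show ?thesis
    proof (cases "k \<le> n")
      case True
      thus ?thesis using extension_defect[OF True] Suc height by (simp add: profile_def add.assoc)
    next
      case False
      thus ?thesis using r Suc height by (simp add: profile_def dyck_seqs_def)
    qed
  qed
qed

end

lemma profile_surj_step:
  assumes surj: "dyck_seqs (Suc n) \<subseteq> profile (d + 1) e ` sparse_colourings (d + 1) e"
    and height: "e = d + 2 + int n"
    and r: "r \<in> dyck_seqs (Suc (Suc n))"
  shows "r \<in> profile d e ` sparse_colourings d e"
proof -
  have "lower_profile n r \<in> profile (d + 1) e ` sparse_colourings (d + 1) e"
    using surj lower_profile_in_dyck_seqs[OF r] by (rule subsetD)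
  then obtain B' where B': "B' \<in> sparse_colourings (d + 1) e"
    and lower: "lower_profile n r = profile (d + 1) e B'"
    by (metis imageE)
  show ?thesis
    using extension_sparse[OF B' lower height r] extension_profile[OF B' lower height r]
    by (metis image_eqI)
qed

lemma profile_bij:
  "e - d - 1 = int n \<Longrightarrow> bij_betw (profile d e) (sparse_colourings d e) (dyck_seqs (Suc n))"
proof (induction n arbitrary: d)
  case 0
  hence "e = d + 1" by simp
  thus ?case using profile_bij_height_0[of d] by simp
next
  case (Suc n)
  have lower: "bij_betw (profile (d + 1) e) (sparse_colourings (d + 1) e) (dyck_seqs (Suc n))"
    using Suc by simp
  have "nat (e - d) = Suc (Suc n)" "d < e" "e = d + 2 + int n" using Suc.prems by auto
  hence "profile d e ` sparse_colourings d e \<subseteq> dyck_seqs (Suc (Suc n))"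
    using profile_in_dyck_seqs[of _ d e] by auto
  moreover have "dyck_seqs (Suc (Suc n)) \<subseteq> profile d e ` sparse_colourings d e"
    using profile_surj_step[of n d e] bij_betw_imp_surj_on[OF lower] \<open>e = d + 2 + int n\<close>
    by blast
  ultimately show ?case
    using profile_inj_step[OF bij_betw_imp_inj_on[OF lower]] by (simp add: bij_betw_def)
qed

lemma card_sparse_colourings:
  "e - d - 1 = int n \<Longrightarrow> card (sparse_colourings d e) = card (dyck_seqs (Suc n))"
  using profile_bij by (rule bij_betw_same_card)

section \<open>Counting Dyck sequences\<close>

lemma dyck_seqs_bound: "r \<in> dyck_seqs n \<Longrightarrow> r i \<le> i"
proof (induction i)
  case 0 thus ?case by (simp add: dyck_seqs_def)
next
  case (Suc i)
  thus ?case by (cases "Suc i < n") (auto simp: dyck_seqs_def intro: le_trans)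
qed

lemma finite_dyck_seqs: "finite (dyck_seqs n)"
proof (rule finite_subset)
  show "dyck_seqs n \<subseteq> {r. \<forall>i. (i \<in> {..<n} \<longrightarrow> r i \<in> {..n}) \<and> (i \<notin> {..<n} \<longrightarrow> r i = 0)}"
  proof (intro subsetI CollectI allI conjI impI)
    fix r i assume r: "r \<in> dyck_seqs n"
    show "r i \<in> {..n}" if "i \<in> {..<n}" using dyck_seqs_bound[OF r, of i] that by simp
    show "r i = 0" if "i \<notin> {..<n}" using r that by (simp add: dyck_seqs_def)
  qed
qed (rule finite_set_of_finite_funs; simp)

definition dyck_ending :: "nat \<Rightarrow> nat \<Rightarrow> nat" where
  "dyck_ending m k = card {r \<in> dyck_seqs (Suc m). r m = k}"

text \<open>A Dyck sequence ending with k is an arbitrary shorter one whose last value is at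
  least k - 1, extended by k.\<close>
lemma card_dyck_extend:
  "card {r \<in> dyck_seqs (Suc (Suc m)). r (Suc m) = k} = card {r \<in> dyck_seqs (Suc m). k \<le> Suc (r m)}"
proof (rule bij_betw_same_card)
  let ?L = "{r \<in> dyck_seqs (Suc (Suc m)). r (Suc m) = k}"
  let ?R = "{r \<in> dyck_seqs (Suc m). k \<le> Suc (r m)}"
  show "bij_betw (\<lambda>r. r(Suc m := 0)) ?L ?R"
  proof (rule bij_betw_byWitness[where f' = "\<lambda>r. r(Suc m := k)"])
    show "\<forall>r\<in>?L. r(Suc m := 0, Suc m := k) = r" by auto
    show "\<forall>r\<in>?R. r(Suc m := k, Suc m := 0) = r" by (auto simp: dyck_seqs_def)
    show "(\<lambda>r. r(Suc m := 0)) ` ?L \<subseteq> ?R"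
    proof (rule image_subsetI)
      fix r assume r: "r \<in> ?L"
      hence "\<forall>i. Suc i < Suc (Suc m) \<longrightarrow> r (Suc i) \<le> Suc (r i)"
        unfolding dyck_seqs_def by blast
      hence "r (Suc m) \<le> Suc (r m)" by simp
      thus "r(Suc m := 0) \<in> ?R" using r unfolding dyck_seqs_def by (auto simp: le_Suc_eq)
    qed
    show "(\<lambda>r. r(Suc m := k)) ` ?R \<subseteq> ?L"
    proof (rule image_subsetI)
      fix r assume "r \<in> ?R"
      thus "r(Suc m := k) \<in> ?L" unfolding dyck_seqs_def by (auto simp: less_Suc_eq)
    qed
  qed
qed

lemma card_dyck_by_last:
  "card {r \<in> dyck_seqs (Suc m). k \<le> Suc (r m)} = (\<Sum>j\<in>{j. j \<le> m \<and> k \<le> Suc j}. dyck_ending m j)"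
proof -
  have "{r \<in> dyck_seqs (Suc m). k \<le> Suc (r m)} =
      (\<Union>j\<in>{j. j \<le> m \<and> k \<le> Suc j}. {r \<in> dyck_seqs (Suc m). r m = j})"
    using dyck_seqs_bound by fastforce
  moreover have "card (\<Union>j\<in>{j. j \<le> m \<and> k \<le> Suc j}. {r \<in> dyck_seqs (Suc m). r m = j}) =
      (\<Sum>j\<in>{j. j \<le> m \<and> k \<le> Suc j}. card {r \<in> dyck_seqs (Suc m). r m = j})"
    by (rule card_UN_disjoint) (auto intro: finite_subset[OF _ finite_dyck_seqs])
  ultimately show ?thesis by (simp add: dyck_ending_def)
qed

lemma dyck_ending_Suc:
  "dyck_ending (Suc m) k = (\<Sum>j\<in>{j. j \<le> m \<and> k \<le> Suc j}. dyck_ending m j)"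
proof -
  have "dyck_ending (Suc m) k = card {r \<in> dyck_seqs (Suc (Suc m)). r (Suc m) = k}"
    by (simp add: dyck_ending_def)
  also have "\<dots> = card {r \<in> dyck_seqs (Suc m). k \<le> Suc (r m)}" by (rule card_dyck_extend)
  finally show ?thesis by (simp only: card_dyck_by_last)
qed

lemma sum_choose_antidiagonal:
  "a \<le> m \<Longrightarrow> (\<Sum>j\<in>{a..m}. (2 * m - j) choose c) + (m choose Suc c) = Suc (2 * m - a) choose Suc c"
proof (induction a rule: inc_induct)
  case base thus ?case by simp
next
  case (step a)
  have "(\<Sum>j\<in>{a..m}. (2 * m - j) choose c) =
      ((2 * m - a) choose c) + (\<Sum>j\<in>{Suc a..m}. (2 * m - j) choose c)"
    using step.hyps by (simp add: sum.atLeast_Suc_atMost)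
  moreover have "Suc (2 * m - Suc a) = 2 * m - a" using step.hyps by simp
  ultimately show ?case using step.IH by simp
qed

lemma dyck_ending_ballot:
  "k \<le> m \<Longrightarrow> int (dyck_ending m k) = int ((2 * m - k) choose m) - int ((2 * m - k) choose Suc m)"
proof (induction m arbitrary: k)
  case 0
  hence "k = 0" by simp
  moreover have "{r \<in> dyck_seqs (Suc 0). r 0 = 0} = {\<lambda>_. 0}" by (auto simp: dyck_seqs_one)
  ultimately show ?case by (simp add: dyck_ending_def)
next
  case (Suc m)
  define a where "a = k - 1"
  have range: "{j. j \<le> m \<and> k \<le> Suc j} = {a..m}" unfolding a_def by auto
  have "a \<le> m" using Suc.prems a_def by simp
  have "int (dyck_ending (Suc m) k) = (\<Sum>j\<in>{a..m}. int (dyck_ending m j))"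
    using dyck_ending_Suc[of m k] range by simp
  also have "\<dots> = (\<Sum>j\<in>{a..m}. int ((2 * m - j) choose m) - int ((2 * m - j) choose Suc m))"
    using Suc.IH by (intro sum.cong) auto
  also have "\<dots> = int (\<Sum>j\<in>{a..m}. (2 * m - j) choose m) - int (\<Sum>j\<in>{a..m}. (2 * m - j) choose Suc m)"
    by (simp add: sum_subtractf)
  also have "\<dots> = int (Suc (2 * m - a) choose Suc m) - int (Suc (2 * m - a) choose Suc (Suc m))"
    using sum_choose_antidiagonal[OF \<open>a \<le> m\<close>, of m] sum_choose_antidiagonal[OF \<open>a \<le> m\<close>, of "Suc m"]
    by (simp add: binomial_eq_0)
  finally have ballot: "int (dyck_ending (Suc m) k) =
      int (Suc (2 * m - a) choose Suc m) - int (Suc (2 * m - a) choose Suc (Suc m))" .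
  show ?case
  proof (cases k)
    case 0
    have "(Suc (2 * m) choose m) = (Suc (2 * m) choose Suc m)"
      using binomial_symmetric[of m "Suc (2 * m)"] by (simp add: Suc_diff_le)
    thus ?thesis using ballot 0 by (simp add: a_def)
  next
    case (Suc k')
    hence "Suc (2 * m - a) = 2 * Suc m - k" using a_def Suc.prems by simp
    thus ?thesis using ballot by simp
  qed
qed

lemma catalan_difference:
  "(2 * Suc m choose Suc m) - (2 * Suc m choose Suc (Suc m)) = (2 * Suc m choose Suc m) div Suc (Suc m)"
proof -
  let ?X = "2 * Suc m choose Suc m" and ?Y = "2 * Suc m choose Suc (Suc m)"
  have "Suc (Suc m + m) = 2 * Suc m" by simp
  hence Y: "Suc (Suc m) * ?Y = Suc m * ?X"
    using Suc_times_binomial_add[of "Suc m" m] by metis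
  have "Suc (Suc m) * (?X - ?Y) = Suc (Suc m) * ?X - Suc m * ?X"
    by (simp only: diff_mult_distrib2 Y)
  also have "\<dots> = ?X" by simp
  finally have X: "Suc (Suc m) * (?X - ?Y) = ?X" .
  have "?X div Suc (Suc m) = Suc (Suc m) * (?X - ?Y) div Suc (Suc m)" by (simp only: X)
  also have "\<dots> = ?X - ?Y" by (rule nonzero_mult_div_cancel_left) simp
  finally show ?thesis by (rule sym)
qed

lemma card_dyck_seqs: "card (dyck_seqs (Suc m)) = (2 * Suc m choose Suc m) div Suc (Suc m)"
proof -
  have "card (dyck_seqs (Suc m)) = dyck_ending (Suc m) 0"
    unfolding dyck_ending_def using card_dyck_extend[of m 0] by simp
  hence "int (card (dyck_seqs (Suc m))) = int (2 * Suc m choose Suc m) - int (2 * Suc m choose Suc (Suc m))"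
    using dyck_ending_ballot[of 0 "Suc m"] by simp
  hence "card (dyck_seqs (Suc m)) = (2 * Suc m choose Suc m) - (2 * Suc m choose Suc (Suc m))"
    by linarith
  thus ?thesis by (simp only: catalan_difference)
qed

theorem mainTheorem2:
  fixes e :: nat
  assumes "e \<ge> 4"
  shows "card (sparse_colourings 2 (int e - 1)) = ((2 * (e - 3)) choose (e - 3)) div (e - 2)"
proof -
  define m where "m = e - 4"
  have height: "(int e - 1) - 2 - 1 = int m" and "e - 3 = Suc m" "e - 2 = Suc (Suc m)"
    using assms m_def by auto
  have "card (sparse_colourings 2 (int e - 1)) = card (dyck_seqs (Suc m))"
    using card_sparse_colourings[OF height] .
  also have "\<dots> = (2 * Suc m choose Suc m) div Suc (Suc m)" by (rule card_dyck_seqs)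
  finally show ?thesis using \<open>e - 3 = Suc m\<close> \<open>e - 2 = Suc (Suc m)\<close> by simp
qed

end
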